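(* For positive integers $n$, \[ A'(n,4,4) = \begin{cases} 1,&\text{if } n\leq 3, \\ 2,&\text{if } n\in\{4,5\}, \\ 4,&\text{if } n=6, \\ 8,&\text{if } n=7, \\ 19,&\text{if } n=9. \end{cases} \]
   Context: $A'(n,4,4)$ denotes the maximum size of a nonempty set $S\subseteq \mathbb{F}_2^n$ such that every element of $S$ has Hamming weight at most $4$ and any two distinct elements of $S$ are at Hamming distance at least $4$. *)

theory Defs
  imports Main
begin

text \<open>Elements of F_2^n are modelled as bit vectors x :: nat => bool that vanish
  outside the coordinate range {0..<n}.\<close>

definition F2vec :: "nat \<Rightarrow> (nat \<Rightarrow> bool) set" where
  "F2vec n = {x. \<forall>i. n \<le> i \<longrightarrow> \<not> x i}"

definition hamming_weight :: "nat \<Rightarrow> (nat \<Rightarrow> bool) \<Rightarrow> nat" where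
  "hamming_weight n x = card {i. i < n \<and> x i}"

definition hamming_dist :: "nat \<Rightarrow> (nat \<Rightarrow> bool) \<Rightarrow> (nat \<Rightarrow> bool) \<Rightarrow> nat" where
  "hamming_dist n x y = card {i. i < n \<and> x i \<noteq> y i}"

definition admissible_code :: "nat \<Rightarrow> nat \<Rightarrow> nat \<Rightarrow> (nat \<Rightarrow> bool) set \<Rightarrow> bool" where
  "admissible_code n d w S \<longleftrightarrow> S \<noteq> {} \<and> S \<subseteq> F2vec n \<and>
     (\<forall>x\<in>S. hamming_weight n x \<le> w) \<and>
     (\<forall>x\<in>S. \<forall>y\<in>S. x \<noteq> y \<longrightarrow> d \<le> hamming_dist n x y)"

definition A' :: "nat \<Rightarrow> nat \<Rightarrow> nat \<Rightarrow> nat" where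
  "A' n d w = Max {card S | S. admissible_code n d w S}"

end

theory Submission
  imports Defs "HOL-Library.Disjoint_Sets"
begin

text \<open>A word is identified with its support, so a code becomes a family of subsets of
  \<open>{..<n}\<close> whose members pairwise have symmetric differences of size at least 4.

  For \<open>n \<le> 3\<close> no two words are at distance 4.
  Each coordinate contributes at most 2 to the three pairwise distances of three words, so three
  words need \<open>12 \<le> 2 n\<close>, which fails for \<open>n \<le> 5\<close>. Splitting a code according to its last
  coordinate (shortening) gives \<open>A(n + 1, 4) \<le> 2 A(n, 4)\<close>, hence the bounds 4 and 8.

  For \<open>n = 9\<close> every codeword \<open>c\<close> with at least two points spreads the weight \<open>6\<close> evenly over
  the pairs of coordinates inside it, so six times the number of such codewords is the total load
  of the 36 pairs. A pair that is itself a codeword has load 6. Any other pair lies either in a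
  unique codeword of size 3 (load 2) or only in codewords of size 4 that are pairwise disjoint
  outside the pair (load at most 3). Codewords of size 2 are pairwise disjoint, hence at most
  four, and a codeword of size at most 1 excludes every other codeword of size at most 2. So with
  no codeword of size 2 there are at most \<open>18 + 1\<close> codewords, with one at most 18, and with two
  or more a pair crossing two of them has load at most 2, which leaves room for at most 19.
  Explicit codes attain every bound.\<close>

section \<open>Codes as families of sets\<close>

definition separated :: "nat \<Rightarrow> 'a set set \<Rightarrow> bool" where
  "separated d F \<longleftrightarrow> (\<forall>c\<in>F. \<forall>e\<in>F. c \<noteq> e \<longrightarrow> d \<le> card (sym_diff c e))"

definition code_family :: "nat \<Rightarrow> nat \<Rightarrow> nat \<Rightarrow> nat set set \<Rightarrow> bool" where
  "code_family n d w F \<longleftrightarrow> F \<subseteq> Pow {..<n} \<and> (\<forall>c\<in>F. card c \<le> w) \<and> separated d F"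

lemma separatedD: "separated d F \<Longrightarrow> c \<in> F \<Longrightarrow> e \<in> F \<Longrightarrow> c \<noteq> e \<Longrightarrow> d \<le> card (sym_diff c e)"
  by (simp add: separated_def)

lemma separated_subset: "separated d F \<Longrightarrow> G \<subseteq> F \<Longrightarrow> separated d G"
  by (auto simp: separated_def)

lemma image_Collect_subset_Pow_iff: "Collect ` S \<subseteq> Pow {..<n} \<longleftrightarrow> S \<subseteq> F2vec n"
  by (auto simp: F2vec_def subset_eq not_le[symmetric])

lemma hamming_weight_eq_card: "x \<in> F2vec n \<Longrightarrow> hamming_weight n x = card (Collect x)"
  unfolding hamming_weight_def by (rule arg_cong[where f = card]) (auto simp: F2vec_def not_le[symmetric])

lemma hamming_dist_eq_card_sym_diff:
  "x \<in> F2vec n \<Longrightarrow> y \<in> F2vec n \<Longrightarrow> hamming_dist n x y = card (sym_diff (Collect x) (Collect y))"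
  unfolding hamming_dist_def by (rule arg_cong[where f = card]) (auto simp: F2vec_def not_le[symmetric])

lemma inj_Collect: "inj Collect"
  by (rule injI) (rule Collect_inj)

lemma admissible_code_iff_code_family:
  "admissible_code n d w S \<longleftrightarrow> S \<noteq> {} \<and> code_family n d w (Collect ` S)"
proof (cases "S \<subseteq> F2vec n")
  case True
  then have "Collect ` S \<subseteq> Pow {..<n}"
    by (metis image_Collect_subset_Pow_iff)
  moreover have "(\<forall>x\<in>S. hamming_weight n x \<le> w) \<longleftrightarrow> (\<forall>c\<in>Collect ` S. card c \<le> w)"
  proof -
    have "(\<forall>x\<in>S. hamming_weight n x \<le> w) \<longleftrightarrow> (\<forall>x\<in>S. card (Collect x) \<le> w)"
      using True hamming_weight_eq_card by (intro ball_cong) (simp_all add: subset_eq)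
    then show ?thesis by simp
  qed
  moreover have "(\<forall>x\<in>S. \<forall>y\<in>S. x \<noteq> y \<longrightarrow> d \<le> hamming_dist n x y) \<longleftrightarrow> separated d (Collect ` S)"
  proof -
    have "(\<forall>x\<in>S. \<forall>y\<in>S. x \<noteq> y \<longrightarrow> d \<le> hamming_dist n x y) \<longleftrightarrow>
        (\<forall>x\<in>S. \<forall>y\<in>S. Collect x \<noteq> Collect y \<longrightarrow> d \<le> card (sym_diff (Collect x) (Collect y)))"
      using True hamming_dist_eq_card_sym_diff
      by (intro ball_cong) (simp_all add: inj_eq[OF inj_Collect] subset_eq)
    then show ?thesis by (simp add: separated_def)
  qed
  ultimately show ?thesis
    using True unfolding admissible_code_def code_family_def by blast
next
  case False
  then have "\<not> Collect ` S \<subseteq> Pow {..<n}"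
    by (metis image_Collect_subset_Pow_iff)
  with False show ?thesis
    unfolding admissible_code_def code_family_def by blast
qed

lemma A'_eq_Max_code_family: "A' n d w = Max {card F |F. F \<noteq> {} \<and> code_family n d w F}"
proof -
  have "{card S |S. admissible_code n d w S} = {card F |F. F \<noteq> {} \<and> code_family n d w F}"
  proof (intro equalityI subsetI)
    fix k assume "k \<in> {card S |S. admissible_code n d w S}"
    then obtain S where S: "admissible_code n d w S" "k = card S" by blast
    have "card (Collect ` S) = card S"
      by (rule card_image) (meson inj_Collect inj_on_subset subset_UNIV)
    then show "k \<in> {card F |F. F \<noteq> {} \<and> code_family n d w F}"
      using S admissible_code_iff_code_family[of n d w S]
      by (intro CollectI exI[of _ "Collect ` S"]) auto
  next
    fix k assume "k \<in> {card F |F. F \<noteq> {} \<and> code_family n d w F}"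
    then obtain F where F: "F \<noteq> {}" "code_family n d w F" "k = card F" by blast
    define S where "S = (\<lambda>c i. i \<in> c) ` F"
    have "Collect ` S = F" by (simp add: S_def image_image)
    moreover have "card S = card F"
      unfolding S_def by (rule card_image) (auto intro: inj_onI simp: fun_eq_iff)
    ultimately show "k \<in> {card S |S. admissible_code n d w S}"
      using F admissible_code_iff_code_family[of n d w S] by (auto simp: S_def)
  qed
  then show ?thesis by (simp add: A'_def)
qed

lemma A'_eqI:
  assumes "F \<noteq> {}" "code_family n d w F" "card F = k"
    and "\<And>G. code_family n d w G \<Longrightarrow> card G \<le> k"
  shows "A' n d w = k"
  unfolding A'_eq_Max_code_family
proof (rule Max_eqI)
  show "finite {card F |F. F \<noteq> {} \<and> code_family n d w F}"
    by (rule finite_subset[of _ "{..k}"]) (use assms(4) in auto)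
qed (use assms in auto)

lemma card_set_Diff_distinct:
  assumes "distinct xs"
  shows "card (set xs - B) = length (filter (\<lambda>x. x \<notin> B) xs)"
proof -
  have "set xs - B = set (filter (\<lambda>x. x \<notin> B) xs)" by auto
  then show ?thesis using assms by (metis distinct_card distinct_filter)
qed

lemma code_family_of_lists:
  assumes "distinct L" "0 < d"
    and "\<forall>xs\<in>set L. distinct xs \<and> set xs \<subseteq> {..<n} \<and> length xs \<le> w"
    and "\<forall>xs\<in>set L. \<forall>ys\<in>set L. xs \<noteq> ys \<longrightarrow>
           d \<le> length (filter (\<lambda>x. x \<notin> set ys) xs) + length (filter (\<lambda>y. y \<notin> set xs) ys)"
  shows "code_family n d w (set ` set L)" "card (set ` set L) = length L"
proof -
  have dist: "d \<le> card (sym_diff (set xs) (set ys))" if "xs \<in> set L" "ys \<in> set L" "xs \<noteq> ys" for xs ys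
  proof -
    have "card (sym_diff (set xs) (set ys)) = card (set xs - set ys) + card (set ys - set xs)"
      by (rule card_Un_disjoint) auto
    then show ?thesis
      using assms(3,4) that by (simp add: card_set_Diff_distinct)
  qed
  have "inj_on set (set L)"
  proof (rule inj_onI, rule ccontr)
    fix xs ys assume "xs \<in> set L" "ys \<in> set L" "set xs = set ys" "xs \<noteq> ys"
    then show False using dist[of xs ys] \<open>0 < d\<close> by simp
  qed
  then show "card (set ` set L) = length L"
    using card_image distinct_card[OF \<open>distinct L\<close>] by metis
  have weight: "card (set xs) \<le> w" if "xs \<in> set L" for xs
    using assms(3) that card_length le_trans by blast
  have "separated d (set ` set L)"
    unfolding separated_def by (blast intro: dist)
  then show "code_family n d w (set ` set L)"
    using assms(3) weight unfolding code_family_def by auto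
qed

section \<open>Elementary bounds\<close>

lemma card_sym_diff_add_card_Int:
  assumes "finite a" "finite b"
  shows "card (sym_diff a b) + 2 * card (a \<inter> b) = card a + card b"
proof -
  have "card (sym_diff a b) = card (a - b) + card (b - a)"
    by (rule card_Un_disjoint) (use assms in auto)
  moreover have "card a = card (a \<inter> b) + card (a - b)" "card b = card (b \<inter> a) + card (b - a)"
    using assms by (simp_all add: card_Int_Diff)
  ultimately show ?thesis by (simp add: Int_commute)
qed

lemma card_sym_diff_triangle:
  assumes "finite a" "finite b" "finite c"
  shows "card (sym_diff a b) + card (sym_diff b c) + card (sym_diff a c) \<le> 2 * card (a \<union> b \<union> c)"
proof -
  let ?U = "a \<union> b \<union> c"
  have count: "card X = (\<Sum>i\<in>?U. of_bool (i \<in> X))" if "X \<subseteq> ?U" for X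
    using that assms by (simp add: Int_absorb1)
  have "card (sym_diff a b) + card (sym_diff b c) + card (sym_diff a c) =
      (\<Sum>i\<in>?U. of_bool (i \<in> sym_diff a b) + of_bool (i \<in> sym_diff b c) + of_bool (i \<in> sym_diff a c))"
    unfolding sum.distrib by (subst (1 2 3) count) auto
  also have "\<dots> \<le> (\<Sum>i\<in>?U. 2)"
  proof (rule sum_mono)
    fix i
    show "of_bool (i \<in> sym_diff a b) + of_bool (i \<in> sym_diff b c) + of_bool (i \<in> sym_diff a c) \<le> (2::nat)"
      by (cases "i \<in> a"; cases "i \<in> b"; cases "i \<in> c") auto
  qed
  finally show ?thesis by simp
qed

lemma disjoint_family_card_le:
  assumes "finite R" "\<And>i. i \<in> I \<Longrightarrow> f i \<subseteq> R" "\<And>i. i \<in> I \<Longrightarrow> card (f i) = k"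
    and "disjoint_family_on f I"
  shows "k * card I \<le> card R"
proof (cases "finite I")
  case True
  have "k * card I = (\<Sum>i\<in>I. card (f i))"
    using assms(3) by simp
  also have "\<dots> = card (\<Union>i\<in>I. f i)"
    by (rule card_UN_disjoint'[symmetric]) (use assms True in \<open>auto intro: rev_finite_subset\<close>)
  also have "\<dots> \<le> card R"
    by (rule card_mono) (use assms in auto)
  finally show ?thesis .
qed simp

lemma separated_card_le_1:
  assumes "F \<subseteq> Pow A" "finite A" "card A < d" "separated d F"
  shows "card F \<le> 1"
proof -
  have eq: "c = e" if "c \<in> F" "e \<in> F" for c e
  proof (rule ccontr)
    assume "c \<noteq> e"
    then have "d \<le> card (sym_diff c e)" using separatedD[OF assms(4) that] by blast
    moreover have "card (sym_diff c e) \<le> card A"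
      using assms(1,2) that by (intro card_mono) auto
    ultimately show False using assms(3) by simp
  qed
  have "finite F"
    using assms(1,2) by (simp add: finite_subset)
  then show ?thesis
    using eq by (simp add: card_le_Suc0_iff_eq)
qed

lemma separated_card_le_2:
  assumes "F \<subseteq> Pow A" "finite A" "2 * card A < 3 * d" "separated d F"
  shows "card F \<le> 2"
proof (rule ccontr)
  assume "\<not> card F \<le> 2"
  then have "3 \<le> card F" by simp
  then obtain T where "T \<subseteq> F" "card T = 3" "finite T"
    by (rule obtain_subset_with_card_n)
  then obtain a b c where abc: "a \<in> F" "b \<in> F" "c \<in> F" "a \<noteq> b" "b \<noteq> c" "a \<noteq> c"
    by (auto simp: card_3_iff)
  have fin: "finite a" "finite b" "finite c"
    using abc assms(1,2) finite_subset by blast+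
  have "d \<le> card (sym_diff a b)" "d \<le> card (sym_diff b c)" "d \<le> card (sym_diff a c)"
    using separatedD[OF assms(4)] abc by simp_all
  then have "3 * d \<le> card (sym_diff a b) + card (sym_diff b c) + card (sym_diff a c)"
    by linarith
  also have "\<dots> \<le> 2 * card (a \<union> b \<union> c)"
    using card_sym_diff_triangle[OF fin] .
  also have "\<dots> \<le> 2 * card A"
    using abc assms(1,2) by (intro mult_le_mono2 card_mono) auto
  finally show False using assms(3) by simp
qed

lemma separated_card_le_double:
  assumes F: "F \<subseteq> Pow {..<Suc n}" "separated d F"
    and bound: "\<And>G. G \<subseteq> Pow {..<n} \<Longrightarrow> separated d G \<Longrightarrow> card G \<le> B"
  shows "card F \<le> 2 * B"
proof -
  let ?F0 = "{c \<in> F. n \<notin> c}" and ?F1 = "{c \<in> F. n \<in> c}"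
  have "finite F"
    using F(1) by (rule finite_subset) simp
  then have "card F = card ?F0 + card ?F1"
    by (subst card_Un_disjoint[symmetric]) (auto intro: arg_cong[where f = card])
  moreover have "card ?F0 \<le> B"
  proof (rule bound)
    show "?F0 \<subseteq> Pow {..<n}" using F(1) by (fastforce simp: less_Suc_eq)
    show "separated d ?F0" using F(2) by (rule separated_subset) blast
  qed
  moreover have "card ?F1 \<le> B"
  proof -
    have "inj_on (\<lambda>c. c - {n}) ?F1"
      by (rule inj_onI) (metis (no_types, lifting) insert_Diff mem_Collect_eq)
    moreover have "card ((\<lambda>c. c - {n}) ` ?F1) \<le> B"
    proof (rule bound)
      show "(\<lambda>c. c - {n}) ` ?F1 \<subseteq> Pow {..<n}" using F(1) by (fastforce simp: less_Suc_eq)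
      have "sym_diff (c - {n}) (e - {n}) = sym_diff c e" if "n \<in> c" "n \<in> e" for c e :: "nat set"
        using that by blast
      then show "separated d ((\<lambda>c. c - {n}) ` ?F1)"
        using F(2) by (auto simp: separated_def)
    qed
    ultimately show ?thesis by (simp add: card_image)
  qed
  ultimately show ?thesis by simp
qed

lemma separated_4_on_6_card_le_4: "(F :: nat set set) \<subseteq> Pow {..<6} \<Longrightarrow> separated 4 F \<Longrightarrow> card F \<le> 4"
  using separated_card_le_double[of F 5 4 2] separated_card_le_2[of _ "{..<5::nat}" 4]
  by (simp add: numeral_eq_Suc)

lemma separated_4_on_7_card_le_8: "(F :: nat set set) \<subseteq> Pow {..<7} \<Longrightarrow> separated 4 F \<Longrightarrow> card F \<le> 8"
  using separated_card_le_double[of F 6 4 4] separated_4_on_6_card_le_4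
  by (simp add: numeral_eq_Suc)

section \<open>Weighted pair counting\<close>

locale weight4_family =
  fixes n :: nat and F :: "nat set set"
  assumes family_subset: "F \<subseteq> Pow {..<n}"
    and card_member_le_4: "c \<in> F \<Longrightarrow> card c \<le> 4"
    and separated_4: "separated 4 F"
begin

lemma finite_member: "c \<in> F \<Longrightarrow> finite c"
  using family_subset finite_subset by blast

lemma finite_family: "finite F"
  using family_subset by (rule finite_subset) simp

lemma card_Int_le:
  assumes "c \<in> F" "e \<in> F" "c \<noteq> e"
  shows "2 * card (c \<inter> e) + 4 \<le> card c + card e"
proof -
  have "4 \<le> card (sym_diff c e)"
    using separatedD[OF separated_4 assms] .
  then show ?thesis
    using card_sym_diff_add_card_Int[OF finite_member finite_member, OF assms(1,2)] by linarith
qed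

definition pairs :: "nat set set" where
  "pairs = {e. e \<subseteq> {..<n} \<and> card e = 2}"

text \<open>The division is exact: codewords have at most four points.\<close>

definition load :: "nat set \<Rightarrow> nat" where
  "load e = (\<Sum>c \<in> {c \<in> F. 2 \<le> card c \<and> e \<subseteq> c}. 6 div (card c choose 2))"

lemma finite_pairs: "finite pairs"
  unfolding pairs_def by (rule finite_subset[of _ "Pow {..<n}"]) auto

lemma card_pairs: "card pairs = n choose 2"
  using n_subsets[of "{..<n}" 2] by (simp add: pairs_def)

lemma sum_load: "6 * card {c \<in> F. 2 \<le> card c} = (\<Sum>e\<in>pairs. load e)"
proof -
  have spread: "(\<Sum>e \<in> {e \<in> pairs. e \<subseteq> c}. 6 div (card c choose 2)) = 6"
    if "c \<in> F" "2 \<le> card c" for c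
  proof -
    have "{e \<in> pairs. e \<subseteq> c} = {e. e \<subseteq> c \<and> card e = 2}"
      using that family_subset by (auto simp: pairs_def)
    then have "card {e \<in> pairs. e \<subseteq> c} = card c choose 2"
      using n_subsets finite_member[OF that(1)] by simp
    moreover have "card c = 2 \<or> card c = 3 \<or> card c = 4"
      using that card_member_le_4 by fastforce
    ultimately show ?thesis by (auto simp: choose_two)
  qed
  have "6 * card {c \<in> F. 2 \<le> card c} =
      (\<Sum>c \<in> {c \<in> F. 2 \<le> card c}. \<Sum>e \<in> {e \<in> pairs. e \<subseteq> c}. 6 div (card c choose 2))"
    using spread by simp
  also have "\<dots> = (\<Sum>e\<in>pairs. \<Sum>c \<in> {c \<in> {c \<in> F. 2 \<le> card c}. e \<subseteq> c}. 6 div (card c choose 2))"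
    by (rule sum.swap_restrict) (use finite_family finite_pairs in auto)
  also have "\<dots> = (\<Sum>e\<in>pairs. load e)"
    by (simp add: load_def conj_assoc)
  finally show ?thesis .
qed

lemma load_pair_codeword:
  assumes "e \<in> F" "card e = 2"
  shows "load e = 6"
proof -
  have "{c \<in> F. 2 \<le> card c \<and> e \<subseteq> c} = {e}"
  proof (intro equalityI subsetI)
    fix c assume c: "c \<in> {c \<in> F. 2 \<le> card c \<and> e \<subseteq> c}"
    show "c \<in> {e}"
    proof (rule ccontr)
      assume "c \<notin> {e}"
      with c have "c \<in> F" "c \<noteq> e" "c \<inter> e = e" by auto
      then have "2 * card e + 4 \<le> card c + card e"
        using card_Int_le[OF _ assms(1)] by metis
      then show False using card_member_le_4[OF \<open>c \<in> F\<close>] assms(2) by simp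
    qed
  qed (use assms in auto)
  then show ?thesis using assms by (simp add: load_def)
qed

lemma triple_through_pair_unique:
  assumes "c \<in> F" "card c = 3" "d \<in> F" "e \<subseteq> c" "e \<subseteq> d" "card e = 2"
  shows "d = c"
proof (rule ccontr)
  assume "d \<noteq> c"
  then have "2 * card (c \<inter> d) + 4 \<le> card c + card d"
    using card_Int_le[OF assms(1,3)] by argo
  moreover have "card e \<le> card (c \<inter> d)"
    using assms finite_member by (intro card_mono) auto
  moreover have "card d \<le> 4" using card_member_le_4 assms by blast
  ultimately show False using assms by simp
qed

lemma quadruples_through_pair_meet:
  assumes "c \<in> F" "d \<in> F" "card c = 4" "card d = 4" "c \<noteq> d" "e \<subseteq> c" "e \<subseteq> d" "card e = 2"
  shows "c \<inter> d = e"
proof -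
  have "card (c \<inter> d) \<le> card e"
    using card_Int_le[OF assms(1,2,5)] assms(3,4,8) by simp
  then show ?thesis
    using card_seteq[of "c \<inter> d" e] assms finite_member by blast
qed

lemma card_codeword_through_pair:
  assumes "e \<in> pairs" "e \<notin> F" "c \<in> F" "2 \<le> card c" "e \<subseteq> c"
  shows "card c = 3 \<or> card c = 4"
proof -
  have "card c \<noteq> 2"
  proof
    assume "card c = 2"
    then have "e = c"
      using card_seteq[OF finite_member[OF assms(3)] assms(5)] assms(1) by (simp add: pairs_def)
    then show False using assms(2,3) by simp
  qed
  then show ?thesis using assms(4) card_member_le_4[OF assms(3)] by linarith
qed

lemma load_triple_through_pair:
  assumes "e \<in> pairs" "c \<in> F" "card c = 3" "e \<subseteq> c"
  shows "load e = 2"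
proof -
  have "card e = 2" using assms(1) by (simp add: pairs_def)
  then have unique: "d = c" if "d \<in> F" "e \<subseteq> d" for d
    using triple_through_pair_unique[OF assms(2,3) that(1) assms(4) that(2)] by blast
  have "{d \<in> F. 2 \<le> card d \<and> e \<subseteq> d} = {c}"
  proof (intro equalityI subsetI)
    show "d \<in> {c}" if "d \<in> {d \<in> F. 2 \<le> card d \<and> e \<subseteq> d}" for d
      using unique that by blast
    show "d \<in> {d \<in> F. 2 \<le> card d \<and> e \<subseteq> d}" if "d \<in> {c}" for d
      using that assms(2-4) by simp
  qed
  then show ?thesis using assms(3) by (simp add: load_def choose_two)
qed

lemma load_quadruples_through_pair:
  assumes e: "e \<in> pairs" "e \<notin> F" "\<nexists>c. c \<in> F \<and> card c = 3 \<and> e \<subseteq> c"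
    and "finite R" and R: "\<And>c. c \<in> F \<Longrightarrow> card c = 4 \<Longrightarrow> e \<subseteq> c \<Longrightarrow> c - e \<subseteq> R"
  shows "2 * load e \<le> card R"
proof -
  define W where "W = {c \<in> F. 2 \<le> card c \<and> e \<subseteq> c}"
  have W: "c \<in> F" "e \<subseteq> c" "card c = 4" if "c \<in> W" for c
    using that card_codeword_through_pair[OF e(1,2)] e(3) by (auto simp: W_def)
  have card_e: "card e = 2" "finite e"
    using e(1) by (auto simp: pairs_def intro: finite_subset)
  have "load e = (\<Sum>c\<in>W. 1)"
    unfolding load_def W_def[symmetric] by (rule sum.cong) (simp_all add: W choose_two)
  moreover have "2 * card W \<le> card R"
  proof (rule disjoint_family_card_le[where f = "\<lambda>c. c - e"])
    show "c - e \<subseteq> R" if "c \<in> W" for c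
      using R[OF W(1)[OF that] W(3)[OF that] W(2)[OF that]] .
    show "card (c - e) = 2" if "c \<in> W" for c
      using card_Diff_subset[OF card_e(2) W(2)[OF that]] W(3)[OF that] card_e(1) by simp
    show "disjoint_family_on (\<lambda>c. c - e) W"
      unfolding disjoint_family_on_def
    proof (intro ballI impI)
      fix c d assume c: "c \<in> W" and d: "d \<in> W" and "c \<noteq> d"
      have "c \<inter> d = e"
        using quadruples_through_pair_meet[OF W(1)[OF c] W(1)[OF d] W(3)[OF c] W(3)[OF d] \<open>c \<noteq> d\<close>
            W(2)[OF c] W(2)[OF d] card_e(1)] .
      then show "(c - e) \<inter> (d - e) = {}" by blast
    qed
  qed fact
  ultimately show ?thesis by simp
qed

lemma load_le:
  assumes "e \<in> pairs" "e \<notin> F" "finite R"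
    and "\<And>c. c \<in> F \<Longrightarrow> card c = 4 \<Longrightarrow> e \<subseteq> c \<Longrightarrow> c - e \<subseteq> R"
  shows "load e \<le> max 2 (card R div 2)"
proof (cases "\<exists>c. c \<in> F \<and> card c = 3 \<and> e \<subseteq> c")
  case True
  then show ?thesis using load_triple_through_pair[OF assms(1)] by auto
next
  case False
  then show ?thesis using load_quadruples_through_pair[OF assms(1,2) False assms(3,4)] by simp
qed

lemma load_le_3:
  assumes "n \<le> 9" "e \<in> pairs" "e \<notin> F"
  shows "load e \<le> 3"
proof -
  have "e \<subseteq> {..<n}" "card e = 2" using assms(2) by (auto simp: pairs_def)
  then have "card ({..<n} - e) \<le> 7"
    using assms(1) by (simp add: card_Diff_subset finite_subset)
  moreover have "load e \<le> max 2 (card ({..<n} - e) div 2)"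
    by (rule load_le) (use assms family_subset in auto)
  ultimately show ?thesis by simp
qed

lemma pair_codewords_disjoint:
  assumes "p \<in> F" "q \<in> F" "card p = 2" "card q = 2" "p \<noteq> q"
  shows "p \<inter> q = {}"
proof -
  have "card (p \<inter> q) = 0" using card_Int_le[OF assms(1,2,5)] assms(3,4) by simp
  then show ?thesis using finite_member assms(1) by simp
qed

lemma card_pair_codewords_le: "2 * card {c \<in> F. card c = 2} \<le> n"
proof -
  have "2 * card {c \<in> F. card c = 2} \<le> card {..<n}"
    using family_subset pair_codewords_disjoint
    by (intro disjoint_family_card_le[where f = id]) (auto simp: disjoint_family_on_def)
  then show ?thesis by simp
qed

lemma card_small_codewords_le_1: "card {c \<in> F. card c \<le> 1} \<le> 1"
proof -
  have "c = d" if "c \<in> F" "d \<in> F" "card c \<le> 1" "card d \<le> 1" for c d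
  proof (rule ccontr)
    assume "c \<noteq> d"
    then have "2 * card (c \<inter> d) + 4 \<le> card c + card d"
      using card_Int_le that(1,2) by blast
    then show False using that(3,4) by linarith
  qed
  then show ?thesis
    using finite_family by (simp add: card_le_Suc0_iff_eq)
qed

lemma no_small_codeword_beside_pair:
  assumes "p \<in> F" "card p = 2"
  shows "{c \<in> F. card c \<le> 1} = {}"
proof -
  have False if "c \<in> F" "card c \<le> 1" for c
  proof -
    have "c \<noteq> p" using that(2) assms(2) by auto
    then have "2 * card (c \<inter> p) + 4 \<le> card c + card p"
      using card_Int_le that(1) assms(1) by blast
    then show False using that(2) assms(2) by linarith
  qed
  then show ?thesis by blast
qed

lemma quadruple_meets_pair_codeword:
  assumes "c \<in> F" "card c = 4" "p \<in> F" "card p = 2" "i \<in> c" "i \<in> p"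
  shows "c \<inter> p = {i}"
proof -
  have "c \<noteq> p" using assms(2,4) by auto
  then have "2 * card (c \<inter> p) + 4 \<le> card c + card p"
    using card_Int_le assms(1,3) by blast
  then have "card (c \<inter> p) \<le> 1" using assms(2,4) by linarith
  then show ?thesis
    using assms(5,6) finite_member[OF assms(1)] card_le_Suc0_iff_eq[of "c \<inter> p"] by auto
qed

lemma cross_pair_not_codeword:
  assumes "p \<in> F" "card p = 2" "i \<in> p" "j \<notin> p"
  shows "{i, j} \<notin> F"
proof
  assume ij: "{i, j} \<in> F"
  have "{i, j} \<noteq> p" using assms(4) by blast
  then have "2 * card ({i, j} \<inter> p) + 4 \<le> card {i, j} + card p"
    using card_Int_le ij assms(1) by blast
  moreover have "1 \<le> card ({i, j} \<inter> p)"
    using assms(3) card_mono[of "{i, j} \<inter> p" "{i}"] by simp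
  ultimately show False using assms(2) card_insert_le_m1[of 2 "{j}" i] by simp
qed

lemma load_le_2_across_pair_codewords:
  assumes "n \<le> 9" "p \<in> F" "q \<in> F" "card p = 2" "card q = 2" "p \<noteq> q" "i \<in> p" "j \<in> q"
  shows "{i, j} \<in> pairs" "{i, j} \<notin> F" "load {i, j} \<le> 2"
proof -
  have pq: "p \<inter> q = {}" using pair_codewords_disjoint assms(2-6) .
  then show "{i, j} \<notin> F"
    using cross_pair_not_codeword assms(2,4,7,8) by blast
  from pq have "i \<noteq> j" using assms(7,8) by blast
  then show "{i, j} \<in> pairs"
    using assms(2,3,7,8) family_subset by (auto simp: pairs_def)
  have "card (p \<union> q) = 4"
    using card_Un_disjoint[OF finite_member[OF assms(2)] finite_member[OF assms(3)] pq] assms(4,5)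
    by simp
  moreover have "p \<union> q \<subseteq> {..<n}" using assms(2,3) family_subset by blast
  ultimately have "card ({..<n} - (p \<union> q)) \<le> 5"
    using assms(1) card_Diff_subset[of "p \<union> q" "{..<n}"] finite_subset[of "p \<union> q" "{..<n}"]
    by simp
  moreover have "load {i, j} \<le> max 2 (card ({..<n} - (p \<union> q)) div 2)"
  proof (rule load_le)
    show "c - {i, j} \<subseteq> {..<n} - (p \<union> q)" if "c \<in> F" "card c = 4" "{i, j} \<subseteq> c" for c
    proof -
      have "i \<in> c" "j \<in> c" using that(3) by auto
      then show ?thesis
        using that quadruple_meets_pair_codeword[OF that(1,2) assms(2,4) _ assms(7)]
          quadruple_meets_pair_codeword[OF that(1,2) assms(3,5) _ assms(8)] family_subset
        by blast
    qed
  qed (fact | simp)+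
  ultimately show "load {i, j} \<le> 2" by simp
qed

lemma sum_pair_bound:
  "(\<Sum>e\<in>pairs. if e \<in> F then 6 else 3) = 3 * card pairs + 3 * card {c \<in> F. card c = 2}"
proof -
  have "(\<Sum>e\<in>pairs. if e \<in> F then 6 else 3) = (\<Sum>e\<in>pairs. 3 + (if e \<in> F then 3 else 0 :: nat))"
    by (rule sum.cong) auto
  also have "\<dots> = 3 * card pairs + (\<Sum>e\<in>pairs \<inter> F. 3)"
    by (simp add: sum.distrib sum.inter_restrict[OF finite_pairs, symmetric])
  also have "pairs \<inter> F = {c \<in> F. card c = 2}"
    using family_subset by (auto simp: pairs_def)
  finally show ?thesis by simp
qed

lemma load_le_pair_bound:
  assumes "n \<le> 9" "e \<in> pairs"
  shows "load e \<le> (if e \<in> F then 6 else 3)"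
  using assms load_le_3 load_pair_codeword by (auto simp: pairs_def)

lemma sum_load_le:
  assumes "n \<le> 9"
  shows "(\<Sum>e\<in>pairs. load e) \<le> 3 * card pairs + 3 * card {c \<in> F. card c = 2}"
proof -
  have "(\<Sum>e\<in>pairs. load e) \<le> (\<Sum>e\<in>pairs. if e \<in> F then 6 else 3)"
    by (rule sum_mono) (rule load_le_pair_bound[OF assms])
  then show ?thesis by (simp add: sum_pair_bound)
qed

lemma sum_load_less:
  assumes "n \<le> 9" "2 \<le> card {c \<in> F. card c = 2}"
  shows "(\<Sum>e\<in>pairs. load e) < 3 * card pairs + 3 * card {c \<in> F. card c = 2}"
proof -
  obtain T where T: "T \<subseteq> {c \<in> F. card c = 2}" "card T = 2" "finite T"
    using assms(2) by (rule obtain_subset_with_card_n)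
  from T(2) obtain p q where "T = {p, q}" "p \<noteq> q"
    unfolding card_2_iff by blast
  with T(1) have pq: "p \<in> F" "q \<in> F" "card p = 2" "card q = 2" "p \<noteq> q"
    by auto
  have "p \<noteq> {}" "q \<noteq> {}" using pq(3,4) by auto
  then obtain i j where "i \<in> p" "j \<in> q" by blast
  note cross = load_le_2_across_pair_codewords[OF assms(1) pq \<open>i \<in> p\<close> \<open>j \<in> q\<close>]
  let ?bound = "\<lambda>e. if e \<in> F then 6 else 3 :: nat"
  have "(\<Sum>e\<in>pairs. load e) = load {i, j} + (\<Sum>e\<in>pairs - {{i, j}}. load e)"
    using sum.remove[OF finite_pairs cross(1)] .
  also have "\<dots> < ?bound {i, j} + (\<Sum>e\<in>pairs - {{i, j}}. ?bound e)"
    using cross(2,3) load_le_pair_bound[OF assms(1)] by (intro add_less_le_mono sum_mono) auto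
  also have "\<dots> = (\<Sum>e\<in>pairs. ?bound e)"
    by (rule sum.remove[OF finite_pairs cross(1), symmetric])
  finally show ?thesis by (simp add: sum_pair_bound)
qed

lemma card_le_19:
  assumes "n = 9"
  shows "card F \<le> 19"
proof -
  let ?small = "{c \<in> F. card c \<le> 1}" and ?large = "{c \<in> F. 2 \<le> card c}"
    and ?D = "{c \<in> F. card c = 2}"
  have split: "card F = card ?small + card ?large"
    using finite_family by (subst card_Un_disjoint[symmetric]) (auto intro: arg_cong[where f = card])
  have "card pairs = n choose 2" by (rule card_pairs)
  also have "\<dots> = 36" using assms by (simp add: choose_two)
  finally have pairs: "card pairs = 36" .
  have small: "card ?small \<le> 1"
    by (rule card_small_codewords_le_1)
  have no_small: "?small = {}" if D: "0 < card ?D"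
  proof -
    obtain p where "p \<in> F" "card p = 2"
      using D by (auto simp: card_gt_0_iff)
    then show ?thesis by (rule no_small_codeword_beside_pair)
  qed
  consider "card ?D = 0" | "card ?D = 1" | "2 \<le> card ?D" by linarith
  then show ?thesis
  proof cases
    case 1
    then have "6 * card ?large \<le> 108"
      using sum_load sum_load_le assms pairs by simp
    then show ?thesis using split small by linarith
  next
    case 2
    then have "?small = {}" by (intro no_small) simp
    then have "card ?small = 0" by (simp only: card.empty)
    moreover have "6 * card ?large \<le> 111"
      using 2 sum_load sum_load_le assms pairs by simp
    ultimately show ?thesis using split by linarith
  next
    case 3
    then have "?small = {}" by (intro no_small) simp
    then have "card ?small = 0" by (simp only: card.empty)
    moreover have "2 * card ?D \<le> 9"
      using card_pair_codewords_le assms by simp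
    moreover have "6 * card ?large < 108 + 3 * card ?D"
      using 3 sum_load sum_load_less assms pairs by simp
    ultimately show ?thesis using split by arith
  qed
qed

end

lemma code_family_card_le_19: "code_family 9 4 4 F \<Longrightarrow> card F \<le> 19"
proof -
  assume "code_family 9 4 4 F"
  then interpret weight4_family 9 F
    by unfold_locales (auto simp: code_family_def)
  show ?thesis by (rule card_le_19) simp
qed

lemma A'_eq_of_lists:
  assumes "length L = k" "0 < k" "distinct L" "0 < d"
    and "\<forall>xs\<in>set L. distinct xs \<and> set xs \<subseteq> {..<n} \<and> length xs \<le> w"
    and "\<forall>xs\<in>set L. \<forall>ys\<in>set L. xs \<noteq> ys \<longrightarrow>
           d \<le> length (filter (\<lambda>x. x \<notin> set ys) xs) + length (filter (\<lambda>y. y \<notin> set xs) ys)"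
    and "\<And>G. code_family n d w G \<Longrightarrow> card G \<le> k"
  shows "A' n d w = k"
  using assms code_family_of_lists[OF assms(3-6)] by (intro A'_eqI[of "set ` set L"]) auto

lemma A'_4_4_le_3:
  assumes "1 \<le> n" "n \<le> 3"
  shows "A' n 4 4 = 1"
proof (rule A'_eq_of_lists[where L = "[[]]"])
  show "card G \<le> 1" if "code_family n 4 4 G" for G
    using that assms separated_card_le_1[of G "{..<n}" 4] by (simp add: code_family_def)
qed simp_all

lemma A'_4_4_4: "A' 4 4 4 = 2"
proof (rule A'_eq_of_lists[where L = "[[], [0, 1, 2, 3]]"])
  show "card G \<le> 2" if "code_family 4 4 4 G" for G
    using that separated_card_le_2[of G "{..<4}" 4] by (simp add: code_family_def)
qed simp_all

lemma A'_5_4_4: "A' 5 4 4 = 2"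
proof (rule A'_eq_of_lists[where L = "[[], [0, 1, 2, 3]]"])
  show "card G \<le> 2" if "code_family 5 4 4 G" for G
    using that separated_card_le_2[of G "{..<5}" 4] by (simp add: code_family_def)
qed simp_all

lemma A'_6_4_4: "A' 6 4 4 = 4"
proof (rule A'_eq_of_lists[where L = "[[], [0, 1, 2, 3], [0, 1, 4, 5], [2, 3, 4, 5]]"])
  show "card G \<le> 4" if "code_family 6 4 4 G" for G
    using that separated_4_on_6_card_le_4 by (simp add: code_family_def)
qed simp_all

text \<open>The empty word together with the complements of the seven lines of the Fano plane.\<close>

lemma A'_7_4_4: "A' 7 4 4 = 8"
proof (rule A'_eq_of_lists[where L = "[[], [2, 4, 5, 6], [0, 3, 5, 6], [0, 1, 4, 6], [0, 1, 2, 5],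
    [1, 2, 3, 6], [0, 2, 3, 4], [1, 3, 4, 5]]"])
  show "card G \<le> 8" if "code_family 7 4 4 G" for G
    using that separated_4_on_7_card_le_8 by (simp add: code_family_def)
qed simp_all

lemma A'_9_4_4: "A' 9 4 4 = 19"
  by (rule A'_eq_of_lists[where L = "[[], [0, 1, 2, 3], [0, 1, 4, 5], [0, 1, 6, 7], [0, 2, 4, 6],
      [0, 2, 5, 8], [0, 3, 5, 7], [0, 3, 6, 8], [0, 4, 7, 8], [1, 2, 4, 7], [1, 2, 6, 8], [1, 3, 4, 8],
      [1, 3, 5, 6], [1, 5, 7, 8], [2, 3, 4, 5], [2, 3, 7, 8], [2, 5, 6, 7], [3, 4, 6, 7], [4, 5, 6, 8]]"])
    (simp_all add: code_family_card_le_19)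

theorem proposition8:
  shows "(\<forall>n::nat. 1 \<le> n \<and> n \<le> 3 \<longrightarrow> A' n 4 4 = 1)
    \<and> A' 4 4 4 = 2 \<and> A' 5 4 4 = 2 \<and> A' 6 4 4 = 4
    \<and> A' 7 4 4 = 8 \<and> A' 9 4 4 = 19"
  using A'_4_4_le_3 A'_4_4_4 A'_5_4_4 A'_6_4_4 A'_7_4_4 A'_9_4_4 by blast

end
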